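(* There is a function $C(t,\epsilon)$ such that the following holds for every positive integer $t$ and every $\epsilon\in(0,1)$: let $G$ be a connected balanced bipartite graph with parts $X,Y$ each of order $n$, with $\delta(G)\geq 3C(t,\epsilon)$ and with no induced $S_{t,t}$. Then \[\Delta_X,\ \Delta_Y\geq \left(1-\frac{C(t,\epsilon)}{\delta(G)}\right)(1-10\epsilon)\,n.\]
   Context: For positive integers $a,b$, the biclaw $S_{a,b}$ is the graph with vertex set $\{x,x_1,\dots,x_a,y,y_1,\dots,y_b\}$ and edges $xy$, $xy_1,\dots,xy_b$, $yx_1,\dots,yx_a$; "no induced $S_{t,t}$" means no induced subgraph isomorphic to $S_{t,t}$. For a bipartite graph with parts $X,Y$, $\Delta_X=\max_{x\in X} d(x)$ and $\Delta_Y=\max_{y\in Y} d(y)$. $\delta(G)$ is the minimum degree. *)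

theory Defs
  imports Complex_Main
begin

definition simple_graph :: "'a set \<Rightarrow> ('a \<Rightarrow> 'a \<Rightarrow> bool) \<Rightarrow> bool" where
  "simple_graph V E \<longleftrightarrow> finite V \<and> (\<forall>u v. E u v \<longrightarrow> u \<in> V \<and> v \<in> V)
     \<and> (\<forall>u v. E u v \<longrightarrow> E v u) \<and> (\<forall>v. \<not> E v v)"

definition connected_graph :: "'a set \<Rightarrow> ('a \<Rightarrow> 'a \<Rightarrow> bool) \<Rightarrow> bool" where
  "connected_graph V E \<longleftrightarrow> V \<noteq> {} \<and> (\<forall>u\<in>V. \<forall>v\<in>V. E\<^sup>*\<^sup>* u v)"

definition bipartition :: "'a set \<Rightarrow> ('a \<Rightarrow> 'a \<Rightarrow> bool) \<Rightarrow> 'a set \<Rightarrow> 'a set \<Rightarrow> bool" where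
  "bipartition V E X Y \<longleftrightarrow> X \<union> Y = V \<and> X \<inter> Y = {}
     \<and> (\<forall>u v. E u v \<longrightarrow> (u \<in> X \<and> v \<in> Y) \<or> (u \<in> Y \<and> v \<in> X))"

definition degree :: "'a set \<Rightarrow> ('a \<Rightarrow> 'a \<Rightarrow> bool) \<Rightarrow> 'a \<Rightarrow> nat" where
  "degree V E v = card {u \<in> V. E v u}"

definition min_degree :: "'a set \<Rightarrow> ('a \<Rightarrow> 'a \<Rightarrow> bool) \<Rightarrow> nat" where
  "min_degree V E = Min (degree V E ` V)"

definition max_degree_on :: "'a set \<Rightarrow> ('a \<Rightarrow> 'a \<Rightarrow> bool) \<Rightarrow> 'a set \<Rightarrow> nat" where
  "max_degree_on V E A = Max (degree V E ` A)"

datatype bc_vertex = BX | BY | BXi nat | BYi nat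

definition biclaw_vertices :: "nat \<Rightarrow> nat \<Rightarrow> bc_vertex set" where
  "biclaw_vertices a b = {BX, BY} \<union> BXi ` {1..a} \<union> BYi ` {1..b}"

fun biclaw_edge :: "bc_vertex \<Rightarrow> bc_vertex \<Rightarrow> bool" where
  "biclaw_edge BX BY = True"
| "biclaw_edge BY BX = True"
| "biclaw_edge BX (BYi _) = True"
| "biclaw_edge (BYi _) BX = True"
| "biclaw_edge BY (BXi _) = True"
| "biclaw_edge (BXi _) BY = True"
| "biclaw_edge _ _ = False"

definition has_induced_biclaw :: "'a set \<Rightarrow> ('a \<Rightarrow> 'a \<Rightarrow> bool) \<Rightarrow> nat \<Rightarrow> nat \<Rightarrow> bool" where
  "has_induced_biclaw V E a b \<longleftrightarrow>
     (\<exists>f. inj_on f (biclaw_vertices a b) \<and> f ` biclaw_vertices a b \<subseteq> V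
        \<and> (\<forall>u\<in>biclaw_vertices a b. \<forall>v\<in>biclaw_vertices a b.
              E (f u) (f v) \<longleftrightarrow> biclaw_edge u v))"

end

theory Submission
  imports Defs
begin

text \<open>
  Biclaw-freeness is used only in its local form: for an edge xy, any t neighbours of y and any
  t neighbours of x (other than x and y) span an edge. Let x0 \<in> X have maximum degree D and let
  the core consist of the vertices of X missing at most D/M neighbours of x0. A greedy count shows
  that in such a linked configuration fewer than K = t(2M)^t vertices can each miss a 1/M-fraction
  of the other side; consequently every neighbour of a core vertex has all but L = t + tK of its
  neighbours in the core. Then Q = N(core) and A = N(Q) are closed up to fewer than t exceptional
  neighbours, and connectivity forces A = X. A vertex of Y not adjacent to x0 now lies outside Q,
  or sees half of the core, or is one of the few remaining neighbours of core vertices; double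
  counting bounds these classes by (t-1)n/\<delta>, 2n/M and Kn/(\<delta>-L), each at most \<epsilon>n once \<delta> is
  large. Hence D \<ge> (1 - 3\<epsilon>)n, which implies the stated bound.
\<close>

lemma sum_card_filter_swap:
  assumes "finite R" "finite S"
  shows "(\<Sum>r\<in>R. card {s\<in>S. rel r s}) = (\<Sum>s\<in>S. card {r\<in>R. rel r s})"
proof -
  have "(\<Sum>r\<in>R. card {s\<in>S. rel r s}) = (\<Sum>r\<in>R. \<Sum>s\<in>S. if rel r s then 1 else 0)"
    using assms(2) by (simp add: sum.inter_filter[symmetric])
  also have "\<dots> = (\<Sum>s\<in>S. \<Sum>r\<in>R. if rel r s then 1 else 0)"
    by (rule sum.swap)
  also have "\<dots> = (\<Sum>s\<in>S. card {r\<in>R. rel r s})"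
    using assms(1) by (simp add: sum.inter_filter[symmetric])
  finally show ?thesis .
qed

lemma double_count_le:
  fixes a b k m :: nat
  assumes "finite R" "finite S"
    and lower: "\<And>r. r \<in> R \<Longrightarrow> a \<le> k * card {s\<in>S. rel r s}"
    and upper: "\<And>s. s \<in> S \<Longrightarrow> m * card {r\<in>R. rel r s} \<le> b"
  shows "m * a * card R \<le> k * b * card S"
proof -
  have "m * a * card R = m * (\<Sum>r\<in>R. a)" by simp
  also have "\<dots> \<le> m * (\<Sum>r\<in>R. k * card {s\<in>S. rel r s})"
    using lower by (intro mult_le_mono2 sum_mono) auto
  also have "\<dots> = k * m * (\<Sum>r\<in>R. card {s\<in>S. rel r s})"
    by (simp add: sum_distrib_left ac_simps)
  also have "\<dots> = k * (\<Sum>s\<in>S. m * card {r\<in>R. rel r s})"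
    by (simp add: sum_card_filter_swap[OF assms(1,2)] sum_distrib_left ac_simps)
  also have "\<dots> \<le> k * (\<Sum>s\<in>S. b)"
    using upper by (intro mult_le_mono2 sum_mono) auto
  finally show ?thesis by (simp add: ac_simps)
qed

lemma exists_vertex_missed_by_many:
  fixes M t :: nat
  assumes "finite P" "finite W" "0 < M" "2 * M * t \<le> card P"
    and Z: "Z \<subseteq> P" "card Z < t"
    and sparse: "\<And>w. w \<in> W \<Longrightarrow> card P \<le> M * card {p\<in>P. \<not> rel w p}"
  shows "\<exists>p\<in>P - Z. card W \<le> 2 * M * card {w\<in>W. \<not> rel w p}"
proof (rule ccontr)
  assume no_good: "\<not> ?thesis"
  have few: "2 * M * card {w\<in>W. \<not> rel w p} \<le> card W - 1" if "p \<in> P - Z" for p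
  proof -
    have "\<not> card W \<le> 2 * M * card {w\<in>W. \<not> rel w p}" using that no_good by blast
    then show ?thesis by linarith
  qed
  have "finite Z" using Z \<open>finite P\<close> finite_subset by blast
  have card_diff: "card (P - Z) = card P - card Z"
    using Z \<open>finite Z\<close> by (simp add: card_Diff_subset)
  have "t \<le> 2 * M * t" using \<open>0 < M\<close> by simp
  then have "0 < card (P - Z)" using card_diff Z \<open>2 * M * t \<le> card P\<close> by linarith
  then have "P - Z \<noteq> {}" "0 < card P" using card_diff by (force, linarith)
  then have "W \<noteq> {}" using no_good by fastforce
  have "card P \<le> 2 * M * card {p\<in>P - Z. \<not> rel w p}" if "w \<in> W" for w
  proof -
    have "card {p\<in>P. \<not> rel w p} \<le> card ({p\<in>P - Z. \<not> rel w p} \<union> Z)"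
      by (rule card_mono) (use \<open>finite P\<close> \<open>finite Z\<close> in auto)
    also have "\<dots> \<le> card {p\<in>P - Z. \<not> rel w p} + card Z"
      by (rule card_Un_le)
    finally have "card {p\<in>P. \<not> rel w p} \<le> card {p\<in>P - Z. \<not> rel w p} + card Z" .
    then have "M * card {p\<in>P. \<not> rel w p} \<le> M * (card {p\<in>P - Z. \<not> rel w p} + t)"
      using Z(2) by (intro mult_le_mono2) linarith
    then have "M * card {p\<in>P. \<not> rel w p} \<le> M * card {p\<in>P - Z. \<not> rel w p} + M * t"
      by (simp add: distrib_left)
    then show ?thesis
      using sparse[OF that] \<open>2 * M * t \<le> card P\<close> by (simp add: mult.assoc)
  qed
  then have "2 * M * card P * card W \<le> 2 * M * (card W - 1) * card (P - Z)"
    by (intro double_count_le[where rel = "\<lambda>w p. \<not> rel w p"])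
      (use \<open>finite P\<close> \<open>finite W\<close> few in auto)
  also have "\<dots> \<le> 2 * M * (card W - 1) * card P"
    using card_diff by simp
  finally have "card W \<le> card W - 1"
    using \<open>0 < M\<close> \<open>0 < card P\<close> by (simp add: mult.commute)
  moreover have "0 < card W" using \<open>W \<noteq> {}\<close> \<open>finite W\<close> by (simp add: card_gt_0_iff)
  ultimately show False by linarith
qed

lemma greedy_anticomplete_pair:
  fixes P :: "'a set" and Q :: "'b set" and rel :: "'b \<Rightarrow> 'a \<Rightarrow> bool" and M t j :: nat
  defines "Bad \<equiv> {q\<in>Q. card P \<le> M * card {p\<in>P. \<not> rel q p}}"
  assumes "finite P" "finite Q" "0 < M" "2 * M * t \<le> card P" "j \<le> t"
  shows "\<exists>Z W. Z \<subseteq> P \<and> card Z = j \<and> W \<subseteq> Bad \<and> (\<forall>w\<in>W. \<forall>z\<in>Z. \<not> rel w z)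
           \<and> card Bad \<le> card W * (2 * M) ^ j"
  using \<open>j \<le> t\<close>
proof (induction j)
  case 0
  show ?case by (rule exI[of _ "{}"], rule exI[of _ Bad]) simp
next
  case (Suc j)
  then obtain Z W where Z: "Z \<subseteq> P" "card Z = j" and W: "W \<subseteq> Bad"
    and anti: "\<forall>w\<in>W. \<forall>z\<in>Z. \<not> rel w z" and large: "card Bad \<le> card W * (2 * M) ^ j"
    by auto
  have "finite W" using W \<open>finite Q\<close> unfolding Bad_def by (auto intro: finite_subset)
  obtain p where p: "p \<in> P - Z" "card W \<le> 2 * M * card {w\<in>W. \<not> rel w p}"
    using exists_vertex_missed_by_many[OF \<open>finite P\<close> \<open>finite W\<close> \<open>0 < M\<close>
        \<open>2 * M * t \<le> card P\<close> Z(1), of rel] Z(2) Suc.prems W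
    unfolding Bad_def by auto
  define W' where "W' = {w\<in>W. \<not> rel w p}"
  have "finite Z" using Z \<open>finite P\<close> finite_subset by blast
  have "card Bad \<le> (2 * M * card W') * (2 * M) ^ j"
    using large p(2) unfolding W'_def by (meson le_trans mult_le_mono1)
  then have "card Bad \<le> card W' * (2 * M) ^ Suc j" by (simp add: ac_simps)
  moreover have "card (insert p Z) = Suc j" using p(1) Z(2) \<open>finite Z\<close> by simp
  ultimately show ?case
    using Z(1) p(1) W anti by (intro exI[of _ "insert p Z"] exI[of _ W']) (auto simp: W'_def)
qed

lemma card_many_nonneighbours_less:
  fixes M t :: nat
  assumes "finite P" "finite Q" "0 < M" "2 * M * t \<le> card P"
    and linked: "\<And>A B. A \<subseteq> Q \<Longrightarrow> B \<subseteq> P \<Longrightarrow> card A = t \<Longrightarrow> card B = t \<Longrightarrow> \<exists>a\<in>A. \<exists>b\<in>B. rel a b"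
  shows "card {q\<in>Q. card P \<le> M * card {p\<in>P. \<not> rel q p}} < t * (2 * M) ^ t"
proof (rule ccontr)
  let ?Bad = "{q\<in>Q. card P \<le> M * card {p\<in>P. \<not> rel q p}}"
  assume "\<not> card ?Bad < t * (2 * M) ^ t"
  moreover obtain Z W where Z: "Z \<subseteq> P" "card Z = t" and W: "W \<subseteq> ?Bad"
    and anti: "\<forall>w\<in>W. \<forall>z\<in>Z. \<not> rel w z" and large: "card ?Bad \<le> card W * (2 * M) ^ t"
    using greedy_anticomplete_pair[OF assms(1-4) order_refl, of rel] by (elim exE conjE)
  ultimately have "t * (2 * M) ^ t \<le> card W * (2 * M) ^ t" by linarith
  then have "t \<le> card W" using \<open>0 < M\<close> by simp
  then obtain A where A: "A \<subseteq> W" "card A = t" by (meson obtain_subset_with_card_n)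
  then show False using linked[of A Z] W Z anti by blast
qed

lemma bipartition_no_triangle:
  assumes "bipartition V E X Y" "E u w" "E v w"
  shows "\<not> E u v"
  using assms unfolding bipartition_def by blast

lemma has_induced_biclawI:
  assumes G: "simple_graph V E" "bipartition V E X Y" and "E x y"
    and Z: "Z \<subseteq> {u\<in>V. E y u} - {x}" "card Z = a"
    and W: "W \<subseteq> {u\<in>V. E x u} - {y}" "card W = b"
    and anti: "\<forall>z\<in>Z. \<forall>w\<in>W. \<not> E z w"
  shows "has_induced_biclaw V E a b"
proof -
  have sym: "E u v \<Longrightarrow> E v u" and irrefl: "\<not> E v v" and fin: "finite V" for u v
    using G(1) unfolding simple_graph_def by auto
  note no_tri = bipartition_no_triangle[OF G(2)]
  have "finite Z" "finite W" using Z(1) W(1) by (blast intro: finite_subset[OF _ fin])+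
  then obtain fz fw where fz: "bij_betw fz {1..a} Z" and fw: "bij_betw fw {1..b} W"
    using ex_bij_betw_nat_finite_1 Z(2) W(2) by metis
  have xy: "x \<in> V" "y \<in> V" "E y x" "x \<noteq> y" "y \<noteq> x"
    using \<open>E x y\<close> G(1) sym irrefl unfolding simple_graph_def by blast+
  have Zs: "z \<in> V" "E y z" "E z y" "\<not> E x z" "\<not> E z x" "z \<noteq> x" "x \<noteq> z" "z \<noteq> y" "y \<noteq> z"
    if "z \<in> Z" for z
    using that Z(1) xy no_tri[OF \<open>E x y\<close>] sym irrefl by blast+
  have Ws: "w \<in> V" "E x w" "E w x" "\<not> E y w" "\<not> E w y" "w \<noteq> x" "x \<noteq> w" "w \<noteq> y" "y \<noteq> w"
    if "w \<in> W" for w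
    using that W(1) xy no_tri[OF \<open>E y x\<close>] sym irrefl by blast+
  have ZZ: "\<not> E z z'" if "z \<in> Z" "z' \<in> Z" for z z' using that Zs no_tri by blast
  have WW: "\<not> E w w'" if "w \<in> W" "w' \<in> W" for w w' using that Ws no_tri by blast
  have ZW: "\<not> E z w" "\<not> E w z" "z \<noteq> w" "w \<noteq> z" if "z \<in> Z" "w \<in> W" for z w
    using that anti sym[of w z] Zs(4)[OF that(1)] Ws(2)[OF that(2)] by auto
  define f where "f v = (case v of BX \<Rightarrow> x | BY \<Rightarrow> y | BXi i \<Rightarrow> fz i | BYi j \<Rightarrow> fw j)" for v
  have fz_in: "fz i \<in> Z" if "i \<in> {1..a}" for i using fz that bij_betwE by blast
  have fw_in: "fw j \<in> W" if "j \<in> {1..b}" for j using fw that bij_betwE by blast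
  have fz_inj: "fz i = fz j \<longleftrightarrow> i = j" if "i \<in> {1..a}" "j \<in> {1..a}" for i j
    using fz that unfolding bij_betw_def inj_on_def by blast
  have fw_inj: "fw i = fw j \<longleftrightarrow> i = j" if "i \<in> {1..b}" "j \<in> {1..b}" for i j
    using fw that unfolding bij_betw_def inj_on_def by blast
  have vertices: "u \<in> biclaw_vertices a b \<longleftrightarrow>
      u = BX \<or> u = BY \<or> (\<exists>i\<in>{1..a}. u = BXi i) \<or> (\<exists>j\<in>{1..b}. u = BYi j)" for u
    unfolding biclaw_vertices_def by auto
  note facts = f_def \<open>E x y\<close> xy Zs[OF fz_in] Ws[OF fw_in] ZZ[OF fz_in fz_in]
    WW[OF fw_in fw_in] ZW[OF fz_in fw_in] fz_inj fw_inj irrefl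
  show ?thesis
    unfolding has_induced_biclaw_def
  proof (intro exI conjI ballI subsetI inj_onI)
    fix u v assume "u \<in> biclaw_vertices a b" "v \<in> biclaw_vertices a b"
    then show "E (f u) (f v) = biclaw_edge u v" and "f u = f v \<Longrightarrow> u = v"
      unfolding vertices by (elim disjE bexE; simp add: facts)+
  next
    fix w assume "w \<in> f ` biclaw_vertices a b"
    then obtain u where "u \<in> biclaw_vertices a b" "w = f u" by blast
    then show "w \<in> V" unfolding vertices by (elim disjE bexE; simp add: facts)
  qed
qed

lemma le_eps_mult_of_scaled:
  fixes m c b n :: nat and \<epsilon> :: real
  assumes "m * c \<le> b * n" "real b \<le> \<epsilon> * real m" "0 < m"
  shows "real c \<le> \<epsilon> * real n"
proof -
  have "real m * real c \<le> real b * real n" using assms(1) by (metis of_nat_le_iff of_nat_mult)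
  also have "\<dots> \<le> \<epsilon> * real m * real n" using assms(2) by (intro mult_right_mono) auto
  finally have "real m * real c \<le> real m * (\<epsilon> * real n)" by (simp add: ac_simps)
  then show ?thesis using assms(3) by simp
qed

locale biclaw_free_bipartite =
  fixes V :: "'a set" and E :: "'a \<Rightarrow> 'a \<Rightarrow> bool" and X Y :: "'a set" and n t :: nat
  assumes simple: "simple_graph V E" and connected: "connected_graph V E"
    and bipartite: "bipartition V E X Y" and card_X: "card X = n" and card_Y: "card Y = n"
    and biclaw_free: "\<not> has_induced_biclaw V E t t"
begin

definition N :: "'a \<Rightarrow> 'a set" where "N v = {u\<in>V. E v u}"

abbreviation dmin :: nat where "dmin \<equiv> min_degree V E"

lemma finite_V: "finite V" and E_sym: "E u v \<Longrightarrow> E v u" and E_in_V: "E u v \<Longrightarrow> u \<in> V \<and> v \<in> V"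
  using simple unfolding simple_graph_def by auto

lemma V_eq: "V = X \<union> Y" and X_Y_disjoint: "X \<inter> Y = {}"
  and E_across: "E u v \<Longrightarrow> (u \<in> X \<and> v \<in> Y) \<or> (u \<in> Y \<and> v \<in> X)"
  using bipartite unfolding bipartition_def by auto

lemma finite_X: "finite X" and finite_Y: "finite Y"
  using finite_V V_eq by auto

lemma mem_N: "u \<in> N v \<longleftrightarrow> E v u"
  unfolding N_def using E_in_V by auto

lemma finite_N: "finite (N v)"
  unfolding N_def using finite_V by auto

lemma N_X: "x \<in> X \<Longrightarrow> N x \<subseteq> Y" and N_Y: "y \<in> Y \<Longrightarrow> N y \<subseteq> X"
  using mem_N E_across X_Y_disjoint by blast+

lemma dmin_le_card_N: "v \<in> V \<Longrightarrow> dmin \<le> card (N v)"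
  unfolding min_degree_def degree_def N_def using finite_V by (intro Min_le) auto

lemma nbhds_linked:
  assumes "E x y" "Z \<subseteq> N y - {x}" "W \<subseteq> N x - {y}" "card Z = t" "card W = t"
  shows "\<exists>z\<in>Z. \<exists>w\<in>W. E z w"
proof (rule ccontr)
  assume "\<not> ?thesis"
  then have "has_induced_biclaw V E t t"
    using assms by (intro has_induced_biclawI[OF simple bipartite \<open>E x y\<close>]) (auto simp: N_def)
  then show False using biclaw_free by contradiction
qed

lemma card_common_non_nbrs_less:
  assumes "E a r" "W \<subseteq> N a - {r}" "card W = t"
  shows "card {z \<in> N r - {a}. \<forall>w\<in>W. \<not> E z w} < t"
proof (rule ccontr)
  assume "\<not> ?thesis"
  then obtain Z where Z: "Z \<subseteq> {z \<in> N r - {a}. \<forall>w\<in>W. \<not> E z w}" "card Z = t"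
    by (meson not_less obtain_subset_with_card_n)
  then show False using nbhds_linked[OF assms(1) _ assms(2) Z(2) assms(3)] by blast
qed

end

locale biclaw_free_max_degree = biclaw_free_bipartite +
  fixes M K L :: nat and x0 :: 'a
  assumes M_ge: "8 \<le> M" and K_eq: "K = t * (2 * M) ^ t" and L_eq: "L = t + t * K"
    and dmin_ge: "2 * M * t + 2 * K + 2 * L + 8 \<le> dmin"
    and x0_in_X: "x0 \<in> X" and card_N_le_x0: "\<And>x. x \<in> X \<Longrightarrow> card (N x) \<le> card (N x0)"
begin

abbreviation D :: nat where "D \<equiv> card (N x0)"

lemma dmin_bounds: "2 * M * t + 2 \<le> dmin" "L + t + 2 \<le> dmin" "t * t + t + 1 \<le> dmin" "2 * K + 8 \<le> dmin"
proof -
  have "t * 1 \<le> t * (2 * M) ^ t" using M_ge by (intro mult_le_mono2) simp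
  then have "t \<le> K" using K_eq by simp
  then have "t + t * t \<le> L" unfolding L_eq by (intro add_left_mono mult_le_mono2)
  then show "t * t + t + 1 \<le> dmin" using dmin_ge by linarith
  show "2 * M * t + 2 \<le> dmin" "L + t + 2 \<le> dmin" "2 * K + 8 \<le> dmin"
    using dmin_ge L_eq by linarith+
qed

lemma x0_in_V: "x0 \<in> V"
  using x0_in_X V_eq by blast

lemma N_x0_subset_Y: "N x0 \<subseteq> Y"
  using N_X[OF x0_in_X] .

lemma dmin_le_D: "dmin \<le> D"
  using dmin_le_card_N[OF x0_in_V] .

lemma D_le_n: "D \<le> n"
  using card_mono[OF finite_Y N_x0_subset_Y] card_Y by simp

lemma D_pos: "0 < D"
  using dmin_le_D dmin_bounds(4) by linarith

definition core :: "'a set" where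
  "core = {a\<in>X. M * card (N x0 - N a) \<le> D}"

lemma x0_in_core: "x0 \<in> core"
  using x0_in_X unfolding core_def by simp

lemma core_subset_X: "core \<subseteq> X"
  unfolding core_def by blast

lemma finite_core: "finite core"
  using finite_subset[OF core_subset_X finite_X] .

lemma card_core_le_n: "card core \<le> n"
  using card_mono[OF finite_X core_subset_X] card_X by simp

lemma card_N_minus_core_less:
  assumes y: "y \<in> N x0"
  shows "card (N y - core) < K"
proof -
  let ?P = "N x0 - {y}" and ?Q = "N y - {x0}"
  have "E x0 y" using y mem_N by blast
  have card_P: "card ?P = D - 1" using y finite_N by simp
  have "N y - core \<subseteq> {q\<in>?Q. card ?P \<le> M * card {p\<in>?P. \<not> E q p}}"
  proof
    fix q assume q: "q \<in> N y - core"
    have "y \<in> Y" using y N_x0_subset_Y by blast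
    then have "q \<in> X" using q N_Y by blast
    then have "D < M * card (N x0 - N q)" using q unfolding core_def by auto
    moreover have "N x0 - N q = {p\<in>?P. \<not> E q p}"
      using q mem_N E_sym by blast
    ultimately have "card ?P \<le> M * card {p\<in>?P. \<not> E q p}" using card_P by simp
    moreover have "q \<in> ?Q" using q x0_in_core by blast
    ultimately show "q \<in> {q\<in>?Q. card ?P \<le> M * card {p\<in>?P. \<not> E q p}}" by blast
  qed
  then have "card (N y - core) \<le> card {q\<in>?Q. card ?P \<le> M * card {p\<in>?P. \<not> E q p}}"
    by (intro card_mono) (auto simp: finite_N)
  also have "\<dots> < K"
    unfolding K_eq
  proof (rule card_many_nonneighbours_less)
    show "2 * M * t \<le> card ?P" using card_P dmin_le_D dmin_bounds(1) by linarith
    show "\<exists>a\<in>A. \<exists>b\<in>B. E a b"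
      if "A \<subseteq> ?Q" "B \<subseteq> ?P" "card A = t" "card B = t" for A B
      using nbhds_linked[OF \<open>E x0 y\<close>] that by blast
  qed (use M_ge finite_N in auto)
  finally show ?thesis .
qed

lemma card_N_minus_N_x0_le:
  assumes "u \<in> core"
  shows "M * card (N u - N x0) \<le> D"
proof -
  have "card (N u) \<le> D" using assms core_subset_X card_N_le_x0 by blast
  then have "card (N u - N x0) \<le> card (N x0 - N u)"
    using card_Int_Diff[OF finite_N, of u "N x0"] card_Int_Diff[OF finite_N, of x0 "N u"]
    by (simp add: Int_commute)
  then have "M * card (N u - N x0) \<le> M * card (N x0 - N u)" by simp
  also have "\<dots> \<le> D" using assms unfolding core_def by simp
  finally show ?thesis .
qed

lemma card_N_inter_N_x0_ge:
  assumes "u \<in> core"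
  shows "7 * D \<le> 8 * card (N u \<inter> N x0)"
proof -
  have "8 * card (N x0 - N u) \<le> M * card (N x0 - N u)" using M_ge by simp
  also have "\<dots> \<le> D" using assms unfolding core_def by simp
  finally show ?thesis
    using card_Int_Diff[OF finite_N, of x0 "N u"] by (simp add: Int_commute)
qed

lemma t_less_card_N_inter_N_x0:
  assumes "u \<in> core"
  shows "t < card (N u \<inter> N x0)"
proof -
  have "16 * t \<le> 2 * M * t" using M_ge by simp
  then show ?thesis using card_N_inter_N_x0_ge[OF assms] dmin_le_D dmin_bounds(1) by linarith
qed

lemma card_N_minus_core_le:
  assumes W: "W \<subseteq> N a \<inter> N x0" "card W = t" and "E a r" "r \<notin> W"
  shows "card (N r - core) \<le> L"
proof -
  let ?Z = "{z \<in> N r - {a}. \<forall>w\<in>W. \<not> E z w}"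
  have "finite W" using W(1) finite_N finite_subset by blast
  have "N r - core \<subseteq> insert a ?Z \<union> (\<Union>w\<in>W. N w - core)"
    using mem_N E_sym by blast
  then have "card (N r - core) \<le> card (insert a ?Z \<union> (\<Union>w\<in>W. N w - core))"
    by (rule card_mono[rotated]) (simp add: finite_N \<open>finite W\<close>)
  also have "\<dots> \<le> card (insert a ?Z) + card (\<Union>w\<in>W. N w - core)"
    by (rule card_Un_le)
  finally have "card (N r - core) \<le> card (insert a ?Z) + card (\<Union>w\<in>W. N w - core)" .
  moreover have "card (insert a ?Z) \<le> 1 + card ?Z"
    by (simp add: card_insert_le_m1 card_insert_if finite_N)
  moreover have "card ?Z < t"
    using card_common_non_nbrs_less[OF \<open>E a r\<close>] W \<open>r \<notin> W\<close> mem_N by auto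
  moreover have "card (\<Union>w\<in>W. N w - core) \<le> t * K"
  proof -
    have "card (\<Union>w\<in>W. N w - core) \<le> (\<Sum>w\<in>W. card (N w - core))"
      by (rule card_UN_le[OF \<open>finite W\<close>])
    also have "\<dots> \<le> card W * K"
      using sum_bounded_above[of W "\<lambda>w. card (N w - core)" K] card_N_minus_core_less W(1)
      by (force intro: less_imp_le)
    finally show ?thesis using W(2) by simp
  qed
  ultimately show ?thesis using L_eq by linarith
qed

lemma card_N_inter_core_ge:
  assumes "u \<in> core" "E u r"
  shows "dmin - L \<le> card (N r \<inter> core)"
proof -
  have "t \<le> card (N u \<inter> N x0 - {r})"
    using t_less_card_N_inter_N_x0[OF assms(1)] by (auto simp: card_Diff_singleton_if)
  then obtain W where W: "W \<subseteq> N u \<inter> N x0 - {r}" "card W = t"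
    by (meson obtain_subset_with_card_n)
  then have "card (N r - core) \<le> L"
    using card_N_minus_core_le[of W u r] assms(2) by blast
  moreover have "dmin \<le> card (N r)" using dmin_le_card_N E_in_V assms(2) by blast
  moreover have "card (N r) = card (N r \<inter> core) + card (N r - core)"
    using card_Int_Diff[OF finite_N] by blast
  ultimately show ?thesis by linarith
qed

definition core_nbhd :: "'a set" where
  "core_nbhd = {y\<in>Y. \<exists>u\<in>core. E u y}"

definition core_nbhd2 :: "'a set" where
  "core_nbhd2 = {a\<in>X. \<exists>y\<in>core_nbhd. E a y}"

lemma card_N_minus_core_nbhd_less:
  assumes a: "a \<in> core_nbhd2"
  shows "card (N a - core_nbhd) < t"
proof (rule ccontr)
  assume "\<not> ?thesis"
  then obtain W where W: "W \<subseteq> N a - core_nbhd" "card W = t"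
    by (meson not_less obtain_subset_with_card_n)
  obtain y u where y: "y \<in> core_nbhd" "E a y" and u: "u \<in> core" "E u y"
    using a unfolding core_nbhd2_def core_nbhd_def by blast
  have "t \<le> card (N y \<inter> core - {a})"
    using card_N_inter_core_ge[OF u] dmin_bounds(2) by (auto simp: card_Diff_singleton_if)
  then obtain Z where Z: "Z \<subseteq> N y \<inter> core - {a}" "card Z = t"
    by (meson obtain_subset_with_card_n)
  obtain z w where zw: "z \<in> Z" "w \<in> W" "E z w"
    using nbhds_linked[OF y(2) _ _ Z(2) W(2)] Z(1) W(1) y by blast
  have "a \<in> X" using a unfolding core_nbhd2_def by blast
  then have "w \<in> Y" using zw W N_X by blast
  then have "w \<in> core_nbhd" using zw Z unfolding core_nbhd_def by blast
  then show False using zw W by blast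
qed

lemma card_N_minus_core_nbhd2_less:
  assumes a: "a \<in> core_nbhd2" and "E a r" "r \<notin> core_nbhd"
  shows "card (N r - core_nbhd2) < t"
proof -
  have "dmin \<le> card (N a)" using dmin_le_card_N E_in_V \<open>E a r\<close> by blast
  moreover have "card (N a) = card (N a \<inter> core_nbhd) + card (N a - core_nbhd)"
    using card_Int_Diff[OF finite_N] by blast
  ultimately have "t \<le> card (N a \<inter> core_nbhd)"
    using card_N_minus_core_nbhd_less[OF a] dmin_bounds(2) L_eq by linarith
  then obtain W where W: "W \<subseteq> N a \<inter> core_nbhd" "card W = t"
    by (meson obtain_subset_with_card_n)
  have "a \<in> X" using a unfolding core_nbhd2_def by blast
  then have "r \<in> Y" using \<open>E a r\<close> E_across X_Y_disjoint by blast
  have "N r - core_nbhd2 \<subseteq> {z \<in> N r - {a}. \<forall>w\<in>W. \<not> E z w}"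
    using W(1) a N_Y[OF \<open>r \<in> Y\<close>] unfolding core_nbhd2_def by blast
  then have "card (N r - core_nbhd2) \<le> card {z \<in> N r - {a}. \<forall>w\<in>W. \<not> E z w}"
    by (rule card_mono[rotated]) (simp add: finite_N)
  also have "\<dots> < t"
    using card_common_non_nbrs_less[OF \<open>E a r\<close>] W \<open>r \<notin> core_nbhd\<close> by blast
  finally show ?thesis .
qed

lemma card_UN_N_minus_core_nbhd_le:
  assumes "Z \<subseteq> core_nbhd2" "card Z = t"
  shows "card (\<Union>z\<in>Z. N z - core_nbhd) \<le> t * t"
proof -
  have "finite Z" using assms(1) finite_X unfolding core_nbhd2_def by (auto intro: finite_subset)
  have "card (\<Union>z\<in>Z. N z - core_nbhd) \<le> (\<Sum>z\<in>Z. card (N z - core_nbhd))"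
    by (rule card_UN_le[OF \<open>finite Z\<close>])
  also have "\<dots> \<le> card Z * t"
    using sum_bounded_above[of Z "\<lambda>z. card (N z - core_nbhd)" t]
      card_N_minus_core_nbhd_less assms(1) by (force intro: less_imp_le)
  finally show ?thesis using assms(2) by simp
qed

lemma N_subset_core_nbhd2:
  assumes a: "a \<in> core_nbhd2" and "E a r" "r \<notin> core_nbhd"
  shows "N r \<subseteq> core_nbhd2"
proof (rule subsetI, rule ccontr)
  fix s assume "s \<in> N r" and s: "s \<notin> core_nbhd2"
  have "a \<in> X" using a unfolding core_nbhd2_def by blast
  then have "r \<in> Y" using \<open>E a r\<close> E_across X_Y_disjoint by blast
  then have "s \<in> X" using \<open>s \<in> N r\<close> N_Y by blast
  have "E s r" using \<open>s \<in> N r\<close> mem_N E_sym by blast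
  have "dmin \<le> card (N r)" using dmin_le_card_N E_in_V \<open>E a r\<close> by blast
  moreover have "card (N r) = card (N r \<inter> core_nbhd2) + card (N r - core_nbhd2)"
    using card_Int_Diff[OF finite_N] by blast
  ultimately have "t \<le> card (N r \<inter> core_nbhd2)"
    using card_N_minus_core_nbhd2_less[OF a \<open>E a r\<close> \<open>r \<notin> core_nbhd\<close>] dmin_bounds(2) L_eq
    by linarith
  then obtain Z where Z: "Z \<subseteq> N r \<inter> core_nbhd2" "card Z = t"
    by (meson obtain_subset_with_card_n)
  have "finite Z" using Z(1) finite_N finite_subset by blast
  define Out where "Out = (\<Union>z\<in>Z. N z - core_nbhd)"
  have "card Out \<le> t * t"
    unfolding Out_def using card_UN_N_minus_core_nbhd_le Z by blast
  have "card (N s) - card (insert r Out) \<le> card (N s - insert r Out)"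
    by (rule diff_card_le_card_Diff) (simp add: Out_def finite_N \<open>finite Z\<close>)
  moreover have "card (insert r Out) \<le> t * t + 1"
    using \<open>card Out \<le> t * t\<close> card_insert_le_m1 by (simp add: card_insert_if Out_def finite_N \<open>finite Z\<close>)
  moreover have "dmin \<le> card (N s)" using dmin_le_card_N E_in_V \<open>E s r\<close> by blast
  ultimately have "t \<le> card (N s - insert r Out)" using dmin_bounds(3) by linarith
  then obtain W where W: "W \<subseteq> N s - insert r Out" "card W = t"
    by (meson obtain_subset_with_card_n)
  have "s \<notin> Z" using Z(1) s by blast
  then obtain z w where zw: "z \<in> Z" "w \<in> W" "E z w"
    using nbhds_linked[OF \<open>E s r\<close> _ _ Z(2) W(2)] Z(1) W(1) mem_N by blast
  \<comment> \<open>s \<in> X lies outside core_nbhd2, so it has no neighbour in core_nbhd.\<close>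
  have "w \<notin> core_nbhd"
    using zw W s \<open>s \<in> X\<close> unfolding core_nbhd2_def by (auto simp: mem_N)
  then have "w \<in> Out" using zw mem_N unfolding Out_def by blast
  then show False using zw W by blast
qed

lemma X_subset_core_nbhd2: "X \<subseteq> core_nbhd2"
proof -
  let ?C = "core_nbhd2 \<union> {r. \<exists>a\<in>core_nbhd2. E a r}"
  have core_nbhd2_X: "core_nbhd2 \<subseteq> X"
    unfolding core_nbhd2_def by blast
  have closed: "v \<in> ?C" if uv: "E u v" and u: "u \<in> ?C" for u v
  proof (cases "u \<in> core_nbhd2")
    case False
    then obtain a where a: "a \<in> core_nbhd2" "E a u" using u by blast
    then have "v \<in> X"
      using uv core_nbhd2_X E_across X_Y_disjoint by blast
    show ?thesis
    proof (cases "u \<in> core_nbhd")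
      case True
      then show ?thesis using \<open>v \<in> X\<close> uv E_sym unfolding core_nbhd2_def by blast
    next
      case False
      then show ?thesis
        using N_subset_core_nbhd2[OF a False] uv mem_N by blast
    qed
  qed (use uv in blast)
  have "x0 \<in> core_nbhd2"
  proof -
    have "N x0 \<noteq> {}" using D_pos by auto
    then obtain y where "y \<in> N x0" by blast
    then have "E x0 y" "y \<in> core_nbhd"
      using mem_N N_x0_subset_Y x0_in_core unfolding core_nbhd_def by blast+
    then show ?thesis using x0_in_X unfolding core_nbhd2_def by blast
  qed
  have "v \<in> ?C" if "E\<^sup>*\<^sup>* x0 v" for v
    using that by (induction rule: rtranclp_induct) (use \<open>x0 \<in> core_nbhd2\<close> closed in blast)+
  moreover have "E\<^sup>*\<^sup>* x0 v" if "v \<in> X" for v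
    using connected x0_in_V that V_eq unfolding connected_graph_def by blast
  ultimately show ?thesis
    using core_nbhd2_X E_across X_Y_disjoint by blast
qed

lemma card_Y_minus_core_nbhd: "dmin * card (Y - core_nbhd) \<le> (t - 1) * n"
proof -
  have "1 * dmin * card (Y - core_nbhd) \<le> 1 * (t - 1) * card X"
  proof (rule double_count_le[where rel = E])
    fix r assume r: "r \<in> Y - core_nbhd"
    then have "{a\<in>X. E r a} = N r" using N_Y mem_N by blast
    then show "dmin \<le> 1 * card {a\<in>X. E r a}" using dmin_le_card_N r V_eq by auto
  next
    fix a assume "a \<in> X"
    then have "a \<in> core_nbhd2" using X_subset_core_nbhd2 by blast
    have "{r\<in>Y - core_nbhd. E r a} \<subseteq> N a - core_nbhd" using mem_N E_sym by blast
    then have "card {r\<in>Y - core_nbhd. E r a} \<le> card (N a - core_nbhd)"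
      by (rule card_mono[rotated]) (simp add: finite_N)
    then show "1 * card {r\<in>Y - core_nbhd. E r a} \<le> t - 1"
      using card_N_minus_core_nbhd_less[OF \<open>a \<in> core_nbhd2\<close>] by linarith
  qed (use finite_X finite_Y in auto)
  then show ?thesis using card_X by simp
qed

definition heavy :: "'a set" where
  "heavy = {r \<in> Y - N x0. card core \<le> 2 * card (N r \<inter> core)}"

lemma N_inter_core_eq: "N r \<inter> core = {u\<in>core. E r u}"
  using mem_N by blast

lemma card_core_pos: "0 < card core"
  using x0_in_core finite_core card_gt_0_iff by blast

lemma card_heavy: "M * card heavy \<le> 2 * n"
proof -
  have "M * card core * card heavy \<le> 2 * D * card core"
  proof (rule double_count_le[where rel = E])
    fix r assume "r \<in> heavy"
    then show "card core \<le> 2 * card {u\<in>core. E r u}"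
      unfolding heavy_def N_inter_core_eq by blast
  next
    fix u assume u: "u \<in> core"
    have "{r\<in>heavy. E r u} \<subseteq> N u - N x0"
      unfolding heavy_def using mem_N E_sym by blast
    then have "M * card {r\<in>heavy. E r u} \<le> M * card (N u - N x0)"
      by (intro mult_le_mono2 card_mono) (simp_all add: finite_N)
    also have "\<dots> \<le> D" using card_N_minus_N_x0_le[OF u] .
    finally show "M * card {r\<in>heavy. E r u} \<le> D" .
  qed (simp_all add: heavy_def finite_Y finite_core)
  then have "M * card heavy * card core \<le> 2 * D * card core" by (simp add: ac_simps)
  then have "M * card heavy \<le> 2 * D" using card_core_pos by simp
  then show ?thesis using D_le_n by linarith
qed

lemma exists_typical_nbr:
  assumes u: "u \<in> core"
  shows "\<exists>y \<in> N u \<inter> N x0. 4 * card (core - N y) \<le> card core"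
proof (rule ccontr)
  let ?T = "{y \<in> N x0. 4 * card (core - N y) \<le> card core}"
  assume "\<not> ?thesis"
  then have untypical: "N u \<inter> N x0 \<subseteq> N x0 - ?T" by blast
  have "M * card core * card (N x0 - ?T) \<le> 4 * D * card core"
  proof (rule double_count_le[where rel = "\<lambda>y u. \<not> E y u"])
    fix y assume "y \<in> N x0 - ?T"
    moreover have "core - N y = {u\<in>core. \<not> E y u}" using mem_N core_subset_X V_eq by blast
    ultimately show "card core \<le> 4 * card {u\<in>core. \<not> E y u}" by auto
  next
    fix u assume u: "u \<in> core"
    have "{y\<in>N x0 - ?T. \<not> E y u} \<subseteq> N x0 - N u" using mem_N E_sym by blast
    then have "M * card {y\<in>N x0 - ?T. \<not> E y u} \<le> M * card (N x0 - N u)"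
      by (intro mult_le_mono2 card_mono) (simp_all add: finite_N)
    also have "\<dots> \<le> D" using u unfolding core_def by simp
    finally show "M * card {y\<in>N x0 - ?T. \<not> E y u} \<le> D" .
  qed (simp_all add: finite_N finite_core)
  then have "M * card (N x0 - ?T) * card core \<le> 4 * D * card core" by (simp add: ac_simps)
  then have "M * card (N x0 - ?T) \<le> 4 * D" using card_core_pos by simp
  moreover have "8 * card (N u \<inter> N x0) \<le> M * card (N x0 - ?T)"
    using M_ge card_mono[OF _ untypical] finite_N by (simp add: mult_le_mono)
  ultimately show False using card_N_inter_N_x0_ge[OF u] D_pos by linarith
qed

lemma heavy_if_few_non_nbrs:
  assumes y: "y \<in> N x0" "4 * card (core - N y) \<le> card core"
    and few: "M * card {p \<in> N y - {u}. \<not> E q p} < card (N y - {u})"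
  shows "card core \<le> 2 * card (N q \<inter> core)"
proof -
  let ?P = "N y - {u}" and ?F = "{p \<in> N y - {u}. \<not> E q p}"
  have split_core: "card (N y \<inter> core) + card (core - N y) = card core"
    using card_Int_Diff[OF finite_core, of "N y"] by (simp add: Int_commute)
  have split_N: "card (N y) = card (N y \<inter> core) + card (N y - core)"
    using card_Int_Diff[OF finite_N] by blast
  have out: "card (N y - core) < K" using card_N_minus_core_less[OF y(1)] .
  have "y \<in> V" using y(1) mem_N E_in_V by blast
  have "8 * card ?F < card core + K"
  proof -
    have "8 * card ?F \<le> M * card ?F" using M_ge by simp
    moreover have "card ?P \<le> card (N y)" by (simp add: card_mono finite_N)
    moreover have "card (N y \<inter> core) \<le> card core" using split_core by linarith
    ultimately show ?thesis using few split_N out by linarith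
  qed
  have "N y \<inter> core - {u} - ?F \<subseteq> N q \<inter> core" using mem_N E_sym by blast
  then have "card (N y \<inter> core - {u} - ?F) \<le> card (N q \<inter> core)"
    by (rule card_mono[rotated]) (simp add: finite_N)
  moreover have "card (N y \<inter> core) \<le> card (N y \<inter> core - {u} - ?F) + 1 + card ?F"
  proof -
    have "card (N y \<inter> core) - card (insert u ?F) \<le> card (N y \<inter> core - insert u ?F)"
      by (rule diff_card_le_card_Diff) (simp add: finite_N)
    also have "N y \<inter> core - insert u ?F = N y \<inter> core - {u} - ?F" by blast
    finally have "card (N y \<inter> core) - card (insert u ?F) \<le> card (N y \<inter> core - {u} - ?F)" .
    moreover have "card (insert u ?F) \<le> card ?F + 1"
      by (simp add: card_insert_if finite_N)
    ultimately show ?thesis by linarith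
  qed
  moreover have "dmin \<le> card (N y)" using dmin_le_card_N[OF \<open>y \<in> V\<close>] .
  \<comment> \<open>N y contains 3/4 of the core, and 8 |?F| < |core| + K \<le> 2 |core| - 8 as |core| \<ge> dmin - K.\<close>
  ultimately show ?thesis
    using \<open>8 * card ?F < card core + K\<close> y(2) split_core split_N out dmin_bounds(4) by linarith
qed

lemma card_light_nbrs_less:
  assumes u: "u \<in> core"
  shows "card (N u - N x0 - heavy) < K"
proof -
  obtain y where y: "y \<in> N u \<inter> N x0" "4 * card (core - N y) \<le> card core"
    using exists_typical_nbr[OF u] by blast
  let ?P = "N y - {u}" and ?Q = "N u - {y}"
  have "E u y" "y \<in> V" using y(1) mem_N E_in_V by blast+
  have card_P: "card ?P = card (N y) - 1" using \<open>E u y\<close> E_sym mem_N finite_N by simp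
  have "N u - N x0 - heavy \<subseteq> {q\<in>?Q. card ?P \<le> M * card {p\<in>?P. \<not> E q p}}"
  proof
    fix q assume q: "q \<in> N u - N x0 - heavy"
    have "q \<in> Y" using q u core_subset_X N_X by blast
    have "card ?P \<le> M * card {p\<in>?P. \<not> E q p}"
    proof (rule ccontr)
      assume "\<not> ?thesis"
      then have "card core \<le> 2 * card (N q \<inter> core)"
        using heavy_if_few_non_nbrs[of y u q] y by simp
      then show False using q \<open>q \<in> Y\<close> unfolding heavy_def by blast
    qed
    moreover have "q \<in> ?Q" using q y(1) by blast
    ultimately show "q \<in> {q\<in>?Q. card ?P \<le> M * card {p\<in>?P. \<not> E q p}}" by blast
  qed
  then have "card (N u - N x0 - heavy) \<le> card {q\<in>?Q. card ?P \<le> M * card {p\<in>?P. \<not> E q p}}"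
    by (intro card_mono) (simp_all add: finite_N)
  also have "\<dots> < K"
    unfolding K_eq
  proof (rule card_many_nonneighbours_less)
    show "2 * M * t \<le> card ?P"
      using card_P dmin_le_card_N[OF \<open>y \<in> V\<close>] dmin_bounds(1) by linarith
    show "\<exists>a\<in>A. \<exists>b\<in>B. E a b"
      if A: "A \<subseteq> ?Q" "card A = t" and B: "B \<subseteq> ?P" "card B = t" for A B
    proof -
      obtain b a where "b \<in> B" "a \<in> A" "E b a"
        using nbhds_linked[OF \<open>E u y\<close> B(1) A(1) B(2) A(2)] by blast
      then show ?thesis using E_sym by blast
    qed
  qed (use M_ge finite_N in auto)
  finally show ?thesis .
qed

lemma card_light_part: "(dmin - L) * card (core_nbhd - N x0 - heavy) \<le> K * n"
proof -
  have "1 * (dmin - L) * card (core_nbhd - N x0 - heavy) \<le> 1 * K * card core"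
  proof (rule double_count_le[where rel = E])
    fix r assume "r \<in> core_nbhd - N x0 - heavy"
    then obtain u where "u \<in> core" "E u r" unfolding core_nbhd_def by blast
    then show "dmin - L \<le> 1 * card {u\<in>core. E r u}"
      using card_N_inter_core_ge N_inter_core_eq by simp
  next
    fix u assume u: "u \<in> core"
    have "{r\<in>core_nbhd - N x0 - heavy. E r u} \<subseteq> N u - N x0 - heavy" using mem_N E_sym by blast
    then have "card {r\<in>core_nbhd - N x0 - heavy. E r u} \<le> card (N u - N x0 - heavy)"
      by (rule card_mono[rotated]) (simp add: finite_N)
    then show "1 * card {r\<in>core_nbhd - N x0 - heavy. E r u} \<le> K"
      using card_light_nbrs_less[OF u] by linarith
  qed (simp_all add: core_nbhd_def finite_Y finite_core)
  then show ?thesis using card_core_le_n by (simp add: le_trans)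
qed

lemma card_N_x0_ge:
  fixes \<epsilon> :: real
  assumes "2 \<le> \<epsilon> * real M" "real t \<le> \<epsilon> * real dmin" "real K \<le> \<epsilon> * real (dmin - L)"
  shows "(1 - 3 * \<epsilon>) * real n \<le> real D"
proof -
  let ?c1 = "card (Y - core_nbhd)" and ?c2 = "card heavy" and ?c3 = "card (core_nbhd - N x0 - heavy)"
  have c1: "real ?c1 \<le> \<epsilon> * real n"
    by (rule le_eps_mult_of_scaled[OF card_Y_minus_core_nbhd]) (use assms(2) dmin_bounds(4) in auto)
  have c2: "real ?c2 \<le> \<epsilon> * real n"
    by (rule le_eps_mult_of_scaled[OF card_heavy]) (use assms(1) M_ge in auto)
  have c3: "real ?c3 \<le> \<epsilon> * real n"
    by (rule le_eps_mult_of_scaled[OF card_light_part]) (use assms(3) dmin_bounds(2) in auto)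
  have "Y - N x0 \<subseteq> (Y - core_nbhd) \<union> heavy \<union> (core_nbhd - N x0 - heavy)"
    unfolding heavy_def core_nbhd_def by blast
  then have "card (Y - N x0) \<le> card ((Y - core_nbhd) \<union> heavy \<union> (core_nbhd - N x0 - heavy))"
    by (rule card_mono[rotated]) (simp add: finite_Y heavy_def core_nbhd_def)
  also have "\<dots> \<le> ?c1 + ?c2 + ?c3"
    by (meson card_Un_le add_le_mono1 le_trans)
  finally have "card (Y - N x0) \<le> ?c1 + ?c2 + ?c3" .
  moreover have "n = D + card (Y - N x0)"
    using card_Y N_x0_subset_Y finite_Y card_Diff_subset[OF finite_N N_x0_subset_Y]
      card_mono[OF finite_Y N_x0_subset_Y] by simp
  ultimately show ?thesis using c1 c2 c3 by (simp add: algebra_simps)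
qed

end

definition degree_threshold :: "nat \<Rightarrow> real \<Rightarrow> nat" where
  "degree_threshold t \<epsilon> =
     (let M = nat \<lceil>2 / \<epsilon>\<rceil> + 8; K = t * (2 * M) ^ t in 2 * M * t + 2 * K + 2 * (t + t * K) + 8)"

context biclaw_free_bipartite
begin

lemma exists_max_degree_vertex:
  obtains x0 where "x0 \<in> X" "\<And>x. x \<in> X \<Longrightarrow> card (N x) \<le> card (N x0)"
    "card (N x0) = max_degree_on V E X"
proof -
  have "V \<noteq> {}" using connected unfolding connected_graph_def by blast
  then have "X \<noteq> {}" using card_X card_Y finite_Y V_eq by auto
  have degree_eq: "degree V E v = card (N v)" for v unfolding degree_def N_def ..
  have "Max (degree V E ` X) \<in> degree V E ` X"
    by (rule Max_in) (simp_all add: finite_X \<open>X \<noteq> {}\<close>)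
  then obtain x0 where "x0 \<in> X" "degree V E x0 = max_degree_on V E X"
    unfolding max_degree_on_def by auto
  moreover have "degree V E x \<le> max_degree_on V E X" if "x \<in> X" for x
    unfolding max_degree_on_def using finite_X that by simp
  ultimately show ?thesis using that unfolding degree_eq by metis
qed

lemma max_degree_on_ge:
  fixes \<epsilon> :: real
  assumes "0 < \<epsilon>" "\<epsilon> < 1" and large: "real (degree_threshold t \<epsilon>) \<le> \<epsilon> * real dmin"
  shows "(1 - 3 * \<epsilon>) * real n \<le> real (max_degree_on V E X)"
proof -
  define M where "M = nat \<lceil>2 / \<epsilon>\<rceil> + 8"
  define K where "K = t * (2 * M) ^ t"
  define L where "L = t + t * K"
  have threshold: "degree_threshold t \<epsilon> = 2 * M * t + 2 * K + 2 * L + 8"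
    unfolding degree_threshold_def M_def K_def L_def Let_def ..
  have "\<epsilon> * real dmin \<le> real dmin"
    using \<open>0 < \<epsilon>\<close> \<open>\<epsilon> < 1\<close> by (intro mult_left_le_one_le) auto
  then have "degree_threshold t \<epsilon> \<le> dmin" using large by linarith
  obtain x0 where x0: "x0 \<in> X" "\<And>x. x \<in> X \<Longrightarrow> card (N x) \<le> card (N x0)"
    "card (N x0) = max_degree_on V E X"
    using exists_max_degree_vertex by blast
  interpret biclaw_free_max_degree V E X Y n t M K L x0
    by unfold_locales (use x0 \<open>degree_threshold t \<epsilon> \<le> dmin\<close> threshold in \<open>auto simp: M_def K_def L_def\<close>)
  have "2 \<le> \<epsilon> * real M"
  proof -
    have "2 / \<epsilon> \<le> real M" using real_nat_ceiling_ge[of "2 / \<epsilon>"] unfolding M_def by linarith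
    then show ?thesis using \<open>0 < \<epsilon>\<close> by (simp add: field_simps)
  qed
  moreover have "real t \<le> \<epsilon> * real dmin"
  proof -
    have "t \<le> degree_threshold t \<epsilon>" using threshold L_def by linarith
    then show ?thesis using large by linarith
  qed
  moreover have "real K \<le> \<epsilon> * real (dmin - L)"
  proof -
    have "\<epsilon> * real L \<le> real L"
      using \<open>0 < \<epsilon>\<close> \<open>\<epsilon> < 1\<close> by (intro mult_left_le_one_le) auto
    moreover have "L \<le> dmin" using dmin_bounds(2) by linarith
    moreover have "real K + real L \<le> real (degree_threshold t \<epsilon>)" using threshold by simp
    ultimately show ?thesis using large by (simp add: right_diff_distrib)
  qed
  ultimately show ?thesis using card_N_x0_ge x0(3) by simp
qed

end

lemma degree_bound_weaken:
  fixes C \<delta> \<epsilon> n \<Delta> :: real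
  assumes "0 \<le> C" "3 * C \<le> \<delta>" "0 < \<epsilon>" "0 \<le> n" "0 \<le> \<Delta>" "(1 - 3 * \<epsilon>) * n \<le> \<Delta>"
  shows "(1 - C / \<delta>) * (1 - 10 * \<epsilon>) * n \<le> \<Delta>"
proof -
  have "0 \<le> 1 - C / \<delta>" "1 - C / \<delta> \<le> 1"
    using assms(1,2) by (auto simp: divide_le_eq_1 divide_nonneg_nonneg)
  show ?thesis
  proof (cases "1 - 10 * \<epsilon> \<le> 0")
    case True
    then have "(1 - C / \<delta>) * (1 - 10 * \<epsilon>) * n \<le> 0"
      using \<open>0 \<le> 1 - C / \<delta>\<close> \<open>0 \<le> n\<close> by (simp add: mult_nonneg_nonpos mult_nonpos_nonneg)
    then show ?thesis using \<open>0 \<le> \<Delta>\<close> by linarith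
  next
    case False
    then have "(1 - C / \<delta>) * (1 - 10 * \<epsilon>) \<le> 1 - 10 * \<epsilon>"
      using \<open>0 \<le> 1 - C / \<delta>\<close> \<open>1 - C / \<delta> \<le> 1\<close> by (intro mult_left_le_one_le) auto
    then have "(1 - C / \<delta>) * (1 - 10 * \<epsilon>) \<le> 1 - 3 * \<epsilon>"
      using \<open>0 < \<epsilon>\<close> by linarith
    then have "(1 - C / \<delta>) * (1 - 10 * \<epsilon>) * n \<le> (1 - 3 * \<epsilon>) * n"
      using \<open>0 \<le> n\<close> by (rule mult_right_mono)
    then show ?thesis using assms(6) by linarith
  qed
qed

theorem mainTheorem14:
  "\<exists>C :: nat \<Rightarrow> real \<Rightarrow> real. \<forall>t \<epsilon>. t > 0 \<longrightarrow> 0 < \<epsilon> \<longrightarrow> \<epsilon> < 1 \<longrightarrow>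
     (\<forall>(V :: nat set) E X Y n.
        simple_graph V E \<longrightarrow> connected_graph V E \<longrightarrow> bipartition V E X Y \<longrightarrow>
        card X = n \<longrightarrow> card Y = n \<longrightarrow>
        real (min_degree V E) \<ge> 3 * C t \<epsilon> \<longrightarrow>
        \<not> has_induced_biclaw V E t t \<longrightarrow>
        real (max_degree_on V E X) \<ge> (1 - C t \<epsilon> / real (min_degree V E)) * (1 - 10 * \<epsilon>) * real n \<and>
        real (max_degree_on V E Y) \<ge> (1 - C t \<epsilon> / real (min_degree V E)) * (1 - 10 * \<epsilon>) * real n)"
proof (intro exI[of _ "\<lambda>t \<epsilon>. real (degree_threshold t \<epsilon>) / (3 * \<epsilon>)"] allI impI)
  fix t :: nat and \<epsilon> :: real and V :: "nat set" and E X Y n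
  assume "0 < \<epsilon>" "\<epsilon> < 1" and G: "simple_graph V E" "connected_graph V E" "bipartition V E X Y"
    "card X = n" "card Y = n" "\<not> has_induced_biclaw V E t t"
    and large: "3 * (real (degree_threshold t \<epsilon>) / (3 * \<epsilon>)) \<le> real (min_degree V E)"
  interpret XY: biclaw_free_bipartite V E X Y n t
    using G by unfold_locales
  interpret YX: biclaw_free_bipartite V E Y X n t
    using G by unfold_locales (auto simp: bipartition_def)
  have "real (degree_threshold t \<epsilon>) \<le> \<epsilon> * real (min_degree V E)"
    using large \<open>0 < \<epsilon>\<close> by (simp add: field_simps)
  then show "(1 - real (degree_threshold t \<epsilon>) / (3 * \<epsilon>) / real (min_degree V E)) * (1 - 10 * \<epsilon>) * real n
        \<le> real (max_degree_on V E X) \<and>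
      (1 - real (degree_threshold t \<epsilon>) / (3 * \<epsilon>) / real (min_degree V E)) * (1 - 10 * \<epsilon>) * real n
        \<le> real (max_degree_on V E Y)"
    using XY.max_degree_on_ge YX.max_degree_on_ge \<open>0 < \<epsilon>\<close> \<open>\<epsilon> < 1\<close> large
    by (intro conjI degree_bound_weaken) auto
qed

end
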